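(* Let $\mathcal{C}$ be a class of instances that is closed under homomorphic equivalence, and let $\mathcal{F}$ be a finite set of connected instances. Then $\mathcal{C}$ admits a left query algorithm over $\mathbb{N}$ of the form $(\mathcal{F},X)$ for some set $X$ if and only if $\mathcal{C}$ admits a left query algorithm over $\mathbb{B}$ of the form $(\mathcal{F},X')$ for some set $X'$.
   Context: A schema is a finite set of relation symbols, each with a positive arity. An instance $A$ over a schema $\sigma$ assigns to each $R\in\sigma$ of arity $r$ a finite $r$-ary relation $R^A$; its facts are the tuples in these relations, and $\mathrm{adom}(A)$ is the set of elements occurring in its facts. A homomorphism $h:A\to B$ is a map $h:\mathrm{adom}(A)\to\mathrm{adom}(B)$ preserving every relation; we write $A\to B$ if one exists. $A,B$ are homomorphically equivalent if $A\to B$ and $B\to A$. A class of instances is a collection of instances over a fixed schema closed under isomorphism; it is closed under homomorphic equivalence if $A\in\mathcal{C}$ and $A,B$ homomorphically equivalent imply $B\in\mathcal{C}$. $\hom_{\mathbb{N}}(A,B)$ is the number of homomorphisms $A\to B$; $\hom_{\mathbb{B}}(A,B)=1$ if $A\to B$ and $0$ otherwise. For $\mathcal{F}=\{F_1,\dots,F_k\}$, $\hom_K(\mathcal{F},A)=(\hom_K(F_i,A))_{i\le k}$. A left $k$-query algorithm over $K\in\{\mathbb{B},\mathbb{N}\}$ for $\mathcal{C}$ is a pair $(\mathcal{F},X)$ with $|\mathcal{F}|=k$ and $X$ a set of $k$-tuples over $K$ (no effectiveness required) such that for every instance $D$: $D\in\mathcal{C}$ iff $\hom_K(\mathcal{F},D)\in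 X$. An instance is connected if its incidence multigraph (bipartite, with parts $\mathrm{adom}(A)$ and the set of facts, an edge joining an element to a fact for each occurrence of the element in the fact) restricted to connectivity between elements is connected, i.e. any two elements of $\mathrm{adom}(A)$ are linked by a chain of facts consecutively sharing elements. *)

theory Defs
  imports Main "HOL-Library.FuncSet"
begin

definition schema :: "'r set \<Rightarrow> ('r \<Rightarrow> nat) \<Rightarrow> bool" where
  "schema S ar \<longleftrightarrow> finite S \<and> (\<forall>R\<in>S. ar R > 0)"

type_synonym ('r, 'a) inst = "'r \<Rightarrow> 'a list set"

definition is_instance :: "'r set \<Rightarrow> ('r \<Rightarrow> nat) \<Rightarrow> ('r, 'a) inst \<Rightarrow> bool" where
  "is_instance S ar A \<longleftrightarrow>
     (\<forall>R. R \<notin> S \<longrightarrow> A R = {}) \<and>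
     (\<forall>R\<in>S. finite (A R) \<and> (\<forall>t\<in>A R. length t = ar R))"

definition adom :: "('r, 'a) inst \<Rightarrow> 'a set" where
  "adom A = (\<Union>R. \<Union>t\<in>A R. set t)"

definition is_hom :: "('r, 'a) inst \<Rightarrow> ('r, 'a) inst \<Rightarrow> ('a \<Rightarrow> 'a) \<Rightarrow> bool" where
  "is_hom A B h \<longleftrightarrow> h \<in> adom A \<rightarrow> adom B \<and> (\<forall>R. \<forall>t\<in>A R. map h t \<in> B R)"

definition homs :: "('r, 'a) inst \<Rightarrow> ('r, 'a) inst \<Rightarrow> ('a \<Rightarrow> 'a) set" where
  "homs A B = {h \<in> adom A \<rightarrow>\<^sub>E adom B. \<forall>R. \<forall>t\<in>A R. map h t \<in> B R}"

definition hom_exists :: "('r, 'a) inst \<Rightarrow> ('r, 'a) inst \<Rightarrow> bool" where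
  "hom_exists A B \<longleftrightarrow> (\<exists>h. is_hom A B h)"

definition hom_N :: "('r, 'a) inst \<Rightarrow> ('r, 'a) inst \<Rightarrow> nat" where
  "hom_N A B = card (homs A B)"

definition hom_B :: "('r, 'a) inst \<Rightarrow> ('r, 'a) inst \<Rightarrow> bool" where
  "hom_B A B = hom_exists A B"

definition isomorphic :: "('r, 'a) inst \<Rightarrow> ('r, 'a) inst \<Rightarrow> bool" where
  "isomorphic A B \<longleftrightarrow>
     (\<exists>h. bij_betw h (adom A) (adom B) \<and> (\<forall>R. B R = map h ` A R))"

definition is_class :: "'r set \<Rightarrow> ('r \<Rightarrow> nat) \<Rightarrow> ('r, 'a) inst set \<Rightarrow> bool" where
  "is_class S ar C \<longleftrightarrow>
     (\<forall>A\<in>C. is_instance S ar A) \<and>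
     (\<forall>A B. A \<in> C \<longrightarrow> is_instance S ar B \<longrightarrow> isomorphic A B \<longrightarrow> B \<in> C)"

definition closed_hom_equiv :: "'r set \<Rightarrow> ('r \<Rightarrow> nat) \<Rightarrow> ('r, 'a) inst set \<Rightarrow> bool" where
  "closed_hom_equiv S ar C \<longleftrightarrow>
     (\<forall>A B. A \<in> C \<longrightarrow> is_instance S ar B \<longrightarrow> hom_exists A B \<longrightarrow> hom_exists B A \<longrightarrow> B \<in> C)"

definition adjacent :: "('r, 'a) inst \<Rightarrow> 'a \<Rightarrow> 'a \<Rightarrow> bool" where
  "adjacent A a b \<longleftrightarrow> (\<exists>R. \<exists>t\<in>A R. a \<in> set t \<and> b \<in> set t)"

definition connected_inst :: "('r, 'a) inst \<Rightarrow> bool" where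
  "connected_inst A \<longleftrightarrow> (\<forall>a\<in>adom A. \<forall>b\<in>adom A. (adjacent A)\<^sup>*\<^sup>* a b)"

text \<open>Left query algorithms (Fs, X): Fs is a list of distinct instances (the k-element set F,
  enumerated), X a set of k-tuples over K.\<close>
definition left_query_alg_N ::
  "'r set \<Rightarrow> ('r \<Rightarrow> nat) \<Rightarrow> ('r, 'a) inst set \<Rightarrow> ('r, 'a) inst list \<Rightarrow> nat list set \<Rightarrow> bool" where
  "left_query_alg_N S ar C Fs X \<longleftrightarrow>
     (\<forall>D. is_instance S ar D \<longrightarrow> (D \<in> C \<longleftrightarrow> map (\<lambda>F. hom_N F D) Fs \<in> X))"

definition left_query_alg_B ::
  "'r set \<Rightarrow> ('r \<Rightarrow> nat) \<Rightarrow> ('r, 'a) inst set \<Rightarrow> ('r, 'a) inst list \<Rightarrow> bool list set \<Rightarrow> bool" where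
  "left_query_alg_B S ar C Fs X \<longleftrightarrow>
     (\<forall>D. is_instance S ar D \<longrightarrow> (D \<in> C \<longleftrightarrow> map (\<lambda>F. hom_B F D) Fs \<in> X))"

end

theory Submission
  imports Defs "HOL-Computational_Algebra.Polynomial"
begin

text \<open>If (F, X) decides C over \<nat>, membership in C depends only on which of the counts
  hom(F, D) are nonzero. Let D and E have the same Boolean vector. Choose an integer polynomial
  p with p(0) > 0 that vanishes at every positive hom(F, D), and split p = p1 - p2 into
  polynomials with coefficients in \<nat>. For connected F the count hom(F, -) turns disjoint
  unions into sums and products into products, so P = D + p2(D) E and Q = D + p1(D) E
  (reading D^a E as the product D \<times> ... \<times> D \<times> E) differ in their counts by
  p(hom(F, D)) hom(F, E), which is 0: if hom(F, E) > 0 then hom(F, D) > 0 as well. Since p2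
  has no constant term, P is homomorphically equivalent to D, while Q, which contains D and a
  copy of E, is equivalent to D + E. Hence D \<in> C \<longleftrightarrow> D + E \<in> C \<longleftrightarrow> E \<in> C.
  The products and disjoint unions live over other element types; they are transported back
  into the infinite type of C along an injection, which preserves homomorphism counts.\<close>

section \<open>Homomorphisms between instances over different element types\<close>

definition hom_set :: "('r, 'a) inst \<Rightarrow> ('r, 'b) inst \<Rightarrow> ('a \<Rightarrow> 'b) set" where
  "hom_set A B = {h \<in> adom A \<rightarrow>\<^sub>E adom B. \<forall>R. \<forall>t\<in>A R. map h t \<in> B R}"

definition hom_ex :: "('r, 'a) inst \<Rightarrow> ('r, 'b) inst \<Rightarrow> bool" where
  "hom_ex A B \<longleftrightarrow> (\<exists>h. \<forall>R. \<forall>t\<in>A R. map h t \<in> B R)"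

definition hom_equiv :: "('r, 'a) inst \<Rightarrow> ('r, 'b) inst \<Rightarrow> bool" where
  "hom_equiv A B \<longleftrightarrow> hom_ex A B \<and> hom_ex B A"

lemma set_subset_adom: "t \<in> A R \<Longrightarrow> set t \<subseteq> adom A"
  unfolding adom_def by blast

lemma map_restrict_adom: "t \<in> A R \<Longrightarrow> map (restrict h (adom A)) t = map h t"
  using set_subset_adom[of t A R] by (auto intro!: map_cong)

lemma hom_set_iff:
  "h \<in> hom_set A B \<longleftrightarrow> h \<in> extensional (adom A) \<and> (\<forall>R. \<forall>t\<in>A R. map h t \<in> B R)"
proof -
  have "h \<in> adom A \<rightarrow> adom B" if "\<forall>R. \<forall>t\<in>A R. map h t \<in> B R"
  proof
    fix x assume "x \<in> adom A"
    then obtain R t where "t \<in> A R" "x \<in> set t" unfolding adom_def by blast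
    with that show "h x \<in> adom B" using set_subset_adom[of "map h t" B R] by auto
  qed
  then show ?thesis unfolding hom_set_def PiE_def by blast
qed

lemma hom_set_memD: "h \<in> hom_set A B \<Longrightarrow> t \<in> A R \<Longrightarrow> map h t \<in> B R"
  unfolding hom_set_iff by blast

lemma hom_set_extensional: "h \<in> hom_set A B \<Longrightarrow> h \<in> extensional (adom A)"
  unfolding hom_set_iff by blast

lemma hom_set_adom: "h \<in> hom_set A B \<Longrightarrow> x \<in> adom A \<Longrightarrow> h x \<in> adom B"
  unfolding hom_set_def by auto

lemma restrict_in_hom_set:
  "(\<And>R t. t \<in> A R \<Longrightarrow> map h t \<in> B R) \<Longrightarrow> restrict h (adom A) \<in> hom_set A B"
  unfolding hom_set_iff by (simp add: map_restrict_adom)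

lemma hom_ex_iff_hom_set_nonempty: "hom_ex A B \<longleftrightarrow> hom_set A B \<noteq> {}"
proof
  assume "hom_ex A B"
  then obtain h where "\<forall>R. \<forall>t\<in>A R. map h t \<in> B R" unfolding hom_ex_def by blast
  then show "hom_set A B \<noteq> {}" using restrict_in_hom_set[of A h B] by blast
qed (auto simp: hom_ex_def dest: hom_set_memD)

lemma hom_B_iff_hom_ex: "hom_B A B \<longleftrightarrow> hom_ex A B"
proof
  assume "hom_B A B" then show "hom_ex A B" unfolding hom_B_def hom_exists_def is_hom_def hom_ex_def by blast
next
  assume "hom_ex A B"
  then obtain h where "h \<in> hom_set A B" unfolding hom_ex_iff_hom_set_nonempty by blast
  then show "hom_B A B" unfolding hom_B_def hom_exists_def is_hom_def hom_set_def PiE_def by blast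
qed

lemma hom_N_eq_card_hom_set: "hom_N A B = card (hom_set A B)"
  unfolding hom_N_def homs_def hom_set_def ..

lemma hom_ex_trans: "hom_ex A B \<Longrightarrow> hom_ex B C \<Longrightarrow> hom_ex A C"
  unfolding hom_ex_def by (metis map_map)

lemma hom_equiv_sym: "hom_equiv A B \<Longrightarrow> hom_equiv B A"
  unfolding hom_equiv_def by blast

lemma hom_equiv_trans: "hom_equiv A B \<Longrightarrow> hom_equiv B C \<Longrightarrow> hom_equiv A C"
  unfolding hom_equiv_def by (meson hom_ex_trans)

lemma closed_hom_equiv_mem_iff:
  assumes "closed_hom_equiv S ar C" "is_instance S ar A" "is_instance S ar B" "hom_equiv A B"
  shows "A \<in> C \<longleftrightarrow> B \<in> C"
  using assms hom_B_iff_hom_ex unfolding closed_hom_equiv_def hom_equiv_def hom_B_def by blast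

lemma finite_adom_instance:
  assumes "schema S ar" "is_instance S ar A" shows "finite (adom A)"
proof -
  have "adom A = (\<Union>R\<in>S. \<Union>t\<in>A R. set t)"
    using assms(2) unfolding adom_def is_instance_def by auto
  then show ?thesis using assms unfolding schema_def is_instance_def by simp
qed

lemma facts_nonempty_instance:
  assumes "schema S ar" "is_instance S ar A" "t \<in> A R" shows "t \<noteq> []"
  using assms unfolding schema_def is_instance_def by fastforce

lemma finite_hom_set: "finite (adom A) \<Longrightarrow> finite (adom B) \<Longrightarrow> finite (hom_set A B)"
  unfolding hom_set_def by (rule finite_subset[OF _ finite_PiE]) auto

lemma card_hom_set_pos_iff:
  "finite (adom A) \<Longrightarrow> finite (adom B) \<Longrightarrow> 0 < card (hom_set A B) \<longleftrightarrow> hom_ex A B"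
  by (simp add: card_gt_0_iff finite_hom_set hom_ex_iff_hom_set_nonempty)

lemma card_hom_set_no_facts: "(\<And>R. A R = {}) \<Longrightarrow> card (hom_set A B) = 1"
proof -
  assume "\<And>R. A R = {}"
  then have "hom_set A B = {\<lambda>_. undefined}" unfolding hom_set_def adom_def by auto
  then show ?thesis by simp
qed

section \<open>Copies, products and disjoint unions\<close>

definition image_inst :: "('b \<Rightarrow> 'a) \<Rightarrow> ('r, 'b) inst \<Rightarrow> ('r, 'a) inst" where
  "image_inst g A R = map g ` A R"

lemma is_instance_image_inst: "is_instance S ar A \<Longrightarrow> is_instance S ar (image_inst g A)"
  unfolding is_instance_def image_inst_def by auto

lemma hom_equiv_image_inst:
  assumes "inj_on g (adom A)" shows "hom_equiv (image_inst g A) A"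
proof -
  have "map (inv_into (adom A) g) (map g t) = t" if "t \<in> A R" for t R
    using set_subset_adom[of t A R, OF that] assms by (auto intro!: map_idI simp: inv_into_f_f)
  then have "hom_ex (image_inst g A) A"
    unfolding hom_ex_def image_inst_def by (intro exI[of _ "inv_into (adom A) g"]) auto
  moreover have "hom_ex A (image_inst g A)"
    unfolding hom_ex_def image_inst_def by auto
  ultimately show ?thesis unfolding hom_equiv_def ..
qed

lemma adom_image_inst: "adom (image_inst g A) = g ` adom A"
  unfolding adom_def image_inst_def by auto

lemma bij_betw_hom_set_image_inst:
  assumes inj: "inj_on g (adom B)"
  shows "bij_betw (\<lambda>h. restrict (g \<circ> h) (adom F)) (hom_set F B) (hom_set F (image_inst g B))"
proof -
  define f where "f h = restrict (g \<circ> h) (adom F)" for h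
  define f' where "f' h = restrict (inv_into (adom B) g \<circ> h) (adom F)" for h
  have "bij_betw f (hom_set F B) (hom_set F (image_inst g B))"
  proof (rule bij_betw_byWitness)
    show "\<forall>h\<in>hom_set F B. f' (f h) = h"
    proof
      fix h assume h: "h \<in> hom_set F B"
      show "f' (f h) = h"
      proof (rule extensionalityI[of _ "adom F"])
        fix x assume "x \<in> adom F"
        then show "f' (f h) x = h x"
          unfolding f_def f'_def using inv_into_f_f[OF inj hom_set_adom[OF h]] by simp
      qed (simp_all add: f'_def hom_set_extensional[OF h])
    qed
    show "\<forall>h\<in>hom_set F (image_inst g B). f (f' h) = h"
    proof
      fix h assume h: "h \<in> hom_set F (image_inst g B)"
      show "f (f' h) = h"
      proof (rule extensionalityI[of _ "adom F"])
        fix x assume "x \<in> adom F"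
        then have "h x \<in> g ` adom B" using hom_set_adom[OF h] by (simp add: adom_image_inst)
        with \<open>x \<in> adom F\<close> show "f (f' h) x = h x" unfolding f_def f'_def by (simp add: f_inv_into_f)
      qed (simp_all add: f_def hom_set_extensional[OF h])
    qed
    show "f ` hom_set F B \<subseteq> hom_set F (image_inst g B)"
    proof (rule image_subsetI)
      fix h assume h: "h \<in> hom_set F B"
      have "map (g \<circ> h) t \<in> image_inst g B R" if "t \<in> F R" for t R
        using hom_set_memD[OF h that] unfolding image_inst_def by (simp flip: map_map)
      then show "f h \<in> hom_set F (image_inst g B)" unfolding f_def by (rule restrict_in_hom_set)
    qed
    show "f' ` hom_set F (image_inst g B) \<subseteq> hom_set F B"
    proof (rule image_subsetI)
      fix h assume h: "h \<in> hom_set F (image_inst g B)"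
      have "map (inv_into (adom B) g \<circ> h) t \<in> B R" if t: "t \<in> F R" for t R
      proof -
        obtain s where s: "s \<in> B R" "map h t = map g s"
          using hom_set_memD[OF h t] unfolding image_inst_def by blast
        have "map (inv_into (adom B) g \<circ> h) t = map (inv_into (adom B) g \<circ> g) s"
          by (simp add: s(2) flip: map_map)
        also have "\<dots> = s"
          using inj set_subset_adom[of s B R, OF s(1)] by (auto intro!: map_idI)
        finally show ?thesis using s(1) by simp
      qed
      then show "f' h \<in> hom_set F B" unfolding f'_def by (rule restrict_in_hom_set)
    qed
  qed
  then show ?thesis unfolding f_def .
qed

lemma card_hom_set_image_inst:
  "inj_on g (adom B) \<Longrightarrow> card (hom_set F (image_inst g B)) = card (hom_set F B)"
  by (metis bij_betw_hom_set_image_inst bij_betw_same_card)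

lemma exists_copy_in_infinite_type:
  fixes Z :: "('r, 'b) inst"
  assumes "infinite (UNIV :: 'a set)" "schema S ar" "is_instance S ar Z"
  shows "\<exists>W :: ('r, 'a) inst. is_instance S ar W \<and> hom_equiv W Z \<and>
           (\<forall>F :: ('r, 'c) inst. card (hom_set F W) = card (hom_set F Z))"
proof -
  have "finite (adom Z)" using assms(2,3) by (rule finite_adom_instance)
  moreover obtain V :: "'a set" where "finite V" "card V = card (adom Z)"
    using infinite_arbitrarily_large[OF assms(1)] by blast
  ultimately obtain g :: "'b \<Rightarrow> 'a" where "inj_on g (adom Z)"
    using card_le_inj[of "adom Z" V] by auto
  then show ?thesis
    using is_instance_image_inst[OF assms(3)] hom_equiv_image_inst card_hom_set_image_inst by blast
qed

definition prod_inst :: "('r, 'b) inst list \<Rightarrow> ('r, 'b list) inst" where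
  "prod_inst L R =
     {t. (\<forall>e\<in>set t. length e = length L) \<and> (\<forall>i<length L. map (\<lambda>e. e ! i) t \<in> (L ! i) R)}"

lemma hom_ex_prod_inst_proj: "i < length L \<Longrightarrow> hom_ex (prod_inst L) (L ! i)"
  unfolding hom_ex_def prod_inst_def by (intro exI[of _ "\<lambda>e. e ! i"]) auto

lemma hom_ex_prod_inst_single: "hom_ex D (prod_inst [D])"
  unfolding hom_ex_def prod_inst_def by (intro exI[of _ "\<lambda>x. [x]"]) (auto simp: comp_def)

lemma length_adom_prod_inst: "e \<in> adom (prod_inst L) \<Longrightarrow> length e = length L"
  unfolding adom_def prod_inst_def by auto

lemma is_instance_prod_inst:
  assumes sch: "schema S ar" and ne: "L \<noteq> []" and insts: "\<forall>B\<in>set L. is_instance S ar B"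
  shows "is_instance S ar (prod_inst L)"
proof -
  have D0: "is_instance S ar (L ! 0)" using ne insts by simp
  have proj0: "map (\<lambda>e. e ! 0) t \<in> (L ! 0) R" if "t \<in> prod_inst L R" for t R
    using that ne unfolding prod_inst_def by simp
  have empty: "prod_inst L R = {}" if "R \<notin> S" for R
    using proj0 D0 that unfolding is_instance_def by blast
  have len: "length t = ar R" if "R \<in> S" "t \<in> prod_inst L R" for R t
  proof -
    have "length (map (\<lambda>e. e ! 0) t) = ar R"
      using proj0[OF that(2)] D0 that(1) unfolding is_instance_def by blast
    then show ?thesis by simp
  qed
  define U where "U = (\<Union>B\<in>set L. adom B)"
  have "finite U" unfolding U_def using insts finite_adom_instance[OF sch] by blast
  have entries: "set e \<subseteq> U" if t: "t \<in> prod_inst L R" and e: "e \<in> set t" for t e R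
  proof
    fix x assume "x \<in> set e"
    moreover have "length e = length L" using t e unfolding prod_inst_def by blast
    ultimately obtain i where i: "i < length L" "x = e ! i" by (metis in_set_conv_nth)
    have "x \<in> set (map (\<lambda>e. e ! i) t)" using e i(2) by simp
    moreover have "map (\<lambda>e. e ! i) t \<in> (L ! i) R" using t i(1) unfolding prod_inst_def by blast
    ultimately have "x \<in> adom (L ! i)" using set_subset_adom[of _ "L ! i" R] by blast
    then show "x \<in> U" using i(1) unfolding U_def by auto
  qed
  have "finite (prod_inst L R)" if "R \<in> S" for R
  proof (rule finite_subset)
    show "prod_inst L R \<subseteq> {t. set t \<subseteq> {e. set e \<subseteq> U \<and> length e = length L} \<and> length t = ar R}"
    proof
      fix t assume t: "t \<in> prod_inst L R"
      then show "t \<in> {t. set t \<subseteq> {e. set e \<subseteq> U \<and> length e = length L} \<and> length t = ar R}"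
        using entries[OF t] len[OF that t] by (auto simp: prod_inst_def)
    qed
    show "finite {t. set t \<subseteq> {e. set e \<subseteq> U \<and> length e = length L} \<and> length t = ar R}"
      using \<open>finite U\<close> by (intro finite_lists_length_eq)
  qed
  then show ?thesis using empty len unfolding is_instance_def by blast
qed

lemma bij_betw_hom_set_prod_inst:
  "bij_betw (\<lambda>h. \<lambda>i\<in>{..<length L}. \<lambda>x\<in>adom F. h x ! i)
     (hom_set F (prod_inst L)) (\<Pi>\<^sub>E i\<in>{..<length L}. hom_set F (L ! i))"
proof -
  define n where "n = length L"
  define f where "f h = (\<lambda>i\<in>{..<n}. \<lambda>x\<in>adom F. h x ! i)" for h :: "'a \<Rightarrow> 'b list"
  define f' where "f' hs = (\<lambda>x\<in>adom F. map (\<lambda>i. hs i x) [0..<n])" for hs :: "nat \<Rightarrow> 'a \<Rightarrow> 'b"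
  have "bij_betw f (hom_set F (prod_inst L)) (\<Pi>\<^sub>E i\<in>{..<n}. hom_set F (L ! i))"
  proof (rule bij_betw_byWitness)
    show "\<forall>h\<in>hom_set F (prod_inst L). f' (f h) = h"
    proof
      fix h assume h: "h \<in> hom_set F (prod_inst L)"
      show "f' (f h) = h"
      proof (rule extensionalityI[of _ "adom F"])
        fix x assume x: "x \<in> adom F"
        have "length (h x) = n"
          using length_adom_prod_inst[OF hom_set_adom[OF h x]] unfolding n_def .
        then have "map (\<lambda>i. h x ! i) [0..<n] = h x" by (metis map_nth)
        moreover have "map (\<lambda>i. f h i x) [0..<n] = map (\<lambda>i. h x ! i) [0..<n]"
          using x by (auto simp: f_def)
        ultimately show "f' (f h) x = h x" unfolding f'_def using x by simp
      qed (simp_all add: f'_def hom_set_extensional[OF h])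
    qed
    show "\<forall>hs\<in>\<Pi>\<^sub>E i\<in>{..<n}. hom_set F (L ! i). f (f' hs) = hs"
    proof
      fix hs assume hs: "hs \<in> (\<Pi>\<^sub>E i\<in>{..<n}. hom_set F (L ! i))"
      show "f (f' hs) = hs"
      proof (rule extensionalityI[of _ "{..<n}"])
        fix i assume i: "i \<in> {..<n}"
        show "f (f' hs) i = hs i"
        proof (rule extensionalityI[of _ "adom F"])
          show "hs i \<in> extensional (adom F)" using hs i by (auto intro: hom_set_extensional)
        qed (use i in \<open>simp_all add: f_def f'_def\<close>)
      qed (use hs in \<open>simp_all add: f_def PiE_iff\<close>)
    qed
    show "f ` hom_set F (prod_inst L) \<subseteq> (\<Pi>\<^sub>E i\<in>{..<n}. hom_set F (L ! i))"
    proof (clarsimp simp: f_def PiE_iff)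
      fix h i assume h: "h \<in> hom_set F (prod_inst L)" and "i < n"
      then have "map (\<lambda>e. e ! i) (map h t) \<in> (L ! i) R" if "t \<in> F R" for t R
        using hom_set_memD[OF h that] unfolding prod_inst_def n_def by blast
      then show "(\<lambda>x\<in>adom F. h x ! i) \<in> hom_set F (L ! i)"
        by (intro restrict_in_hom_set) (simp add: comp_def)
    qed
    show "f' ` (\<Pi>\<^sub>E i\<in>{..<n}. hom_set F (L ! i)) \<subseteq> hom_set F (prod_inst L)"
    proof (clarsimp simp: f'_def)
      fix hs assume hs: "hs \<in> (\<Pi>\<^sub>E i\<in>{..<n}. hom_set F (L ! i))"
      have "map (\<lambda>x. map (\<lambda>i. hs i x) [0..<n]) t \<in> prod_inst L R" if "t \<in> F R" for t R
        using hs that unfolding prod_inst_def n_def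
        by (auto simp: PiE_iff comp_def dest: hom_set_memD)
      then show "(\<lambda>x\<in>adom F. map (\<lambda>i. hs i x) [0..<n]) \<in> hom_set F (prod_inst L)"
        by (rule restrict_in_hom_set)
    qed
  qed
  then show ?thesis unfolding f_def n_def .
qed

lemma card_hom_set_prod_inst:
  "card (hom_set F (prod_inst L)) = (\<Prod>B\<leftarrow>L. card (hom_set F B))"
proof -
  have "card (hom_set F (prod_inst L)) = (\<Prod>i<length L. card (hom_set F (L ! i)))"
    using bij_betw_same_card[OF bij_betw_hom_set_prod_inst] by (simp add: card_PiE)
  also have "\<dots> = (\<Prod>B\<leftarrow>L. card (hom_set F B))"
    by (simp add: prod.list_conv_set_nth atLeast0LessThan)
  finally show ?thesis .
qed

definition sum_inst :: "('r, 'b) inst list \<Rightarrow> ('r, nat \<times> 'b) inst" where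
  "sum_inst Ls R = (\<Union>i<length Ls. map (Pair i) ` (Ls ! i) R)"

lemma is_instance_sum_inst:
  assumes "\<forall>B\<in>set Ls. is_instance S ar B" shows "is_instance S ar (sum_inst Ls)"
proof -
  have insts: "is_instance S ar (Ls ! i)" if "i < length Ls" for i using assms that by simp
  then show ?thesis unfolding is_instance_def sum_inst_def by auto
qed

lemma hom_ex_sum_inst_inj: "B \<in> set Ls \<Longrightarrow> hom_ex B (sum_inst Ls)"
  unfolding hom_ex_def sum_inst_def by (auto simp: in_set_conv_nth)

lemma hom_ex_sum_inst:
  assumes "\<forall>B\<in>set Ls. hom_ex B C" shows "hom_ex (sum_inst Ls) C"
proof -
  have "\<forall>i\<in>{..<length Ls}. \<exists>h. \<forall>R. \<forall>t\<in>(Ls ! i) R. map h t \<in> C R"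
    using assms unfolding hom_ex_def by simp
  then obtain hs where hs: "\<And>i R t. i < length Ls \<Longrightarrow> t \<in> (Ls ! i) R \<Longrightarrow> map (hs i) t \<in> C R"
    by (metis bchoice lessThan_iff)
  have "map (\<lambda>(i, x). hs i x) t \<in> C R" if "t \<in> sum_inst Ls R" for t R
    using that hs unfolding sum_inst_def by (auto simp: comp_def)
  then show ?thesis unfolding hom_ex_def by blast
qed

lemma hom_ex_sum_inst_mono: "set Ls \<subseteq> set Ls' \<Longrightarrow> hom_ex (sum_inst Ls) (sum_inst Ls')"
  by (meson hom_ex_sum_inst hom_ex_sum_inst_inj subsetD)

lemma map_in_sum_inst_component:
  assumes "map h t \<in> sum_inst Ls R"
  shows "\<exists>j<length Ls. map (snd \<circ> h) t \<in> (Ls ! j) R \<and> (\<forall>a\<in>set t. fst (h a) = j)"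
proof -
  obtain j where "j < length Ls" "map h t \<in> map (Pair j) ` (Ls ! j) R"
    using assms unfolding sum_inst_def by blast
  then obtain s where j: "j < length Ls" "s \<in> (Ls ! j) R" and eq: "map h t = map (Pair j) s"
    by blast
  have "map (snd \<circ> h) t = map snd (map (Pair j) s)"
    by (simp only: eq flip: map_map)
  also have "\<dots> = s" by (induction s) auto
  finally have "map (snd \<circ> h) t = s" .
  moreover have "h ` set t = Pair j ` set s"
    using arg_cong[OF eq, of set] by simp
  then have "\<forall>a\<in>set t. fst (h a) = j" by (metis fst_conv image_iff)
  ultimately show ?thesis using j by auto
qed

text \<open>The hypothesis on empty facts is needed: an empty fact could be sent into any summand.\<close>

lemma hom_to_sum_inst_component:
  assumes conn: "connected_inst F" and x0: "x0 \<in> adom F" and nonempty: "\<forall>R. [] \<notin> F R"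
    and h: "\<forall>R. \<forall>t\<in>F R. map h t \<in> sum_inst Ls R"
  shows "\<exists>i<length Ls. (\<forall>x\<in>adom F. fst (h x) = i) \<and> (\<forall>R. \<forall>t\<in>F R. map (snd \<circ> h) t \<in> (Ls ! i) R)"
proof -
  have fact: "\<exists>j<length Ls. map (snd \<circ> h) t \<in> (Ls ! j) R \<and> (\<forall>a\<in>set t. fst (h a) = j)"
    if "t \<in> F R" for t R
    using h that by (intro map_in_sum_inst_component) blast
  have adjacent_eq: "fst (h a) = fst (h b)" if adj: "adjacent F a b" for a b
  proof -
    obtain R t where "t \<in> F R" "a \<in> set t" "b \<in> set t"
      using adj unfolding adjacent_def by blast
    then show ?thesis using fact by metis
  qed
  have const: "fst (h x) = fst (h x0)" if "x \<in> adom F" for x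
  proof -
    have "(adjacent F)\<^sup>*\<^sup>* x0 x" using conn x0 that unfolding connected_inst_def by blast
    then show ?thesis by induction (auto dest: adjacent_eq)
  qed
  moreover have "fst (h x0) < length Ls"
  proof -
    obtain R t where "t \<in> F R" "x0 \<in> set t" using x0 unfolding adom_def by blast
    then show ?thesis using fact by metis
  qed
  moreover have "map (snd \<circ> h) t \<in> (Ls ! fst (h x0)) R" if t: "t \<in> F R" for t R
  proof -
    obtain j where j: "map (snd \<circ> h) t \<in> (Ls ! j) R" "\<forall>a\<in>set t. fst (h a) = j"
      using fact[OF t] by blast
    obtain a where a: "a \<in> set t" using nonempty t by (cases t) auto
    have "a \<in> adom F" using a set_subset_adom[of t F R, OF t] by blast
    then have "j = fst (h x0)" using j(2) a const by metis
    then show ?thesis using j(1) by simp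
  qed
  ultimately show ?thesis by blast
qed

lemma bij_betw_hom_set_sum_inst:
  fixes F :: "('r, 'a) inst" and Ls :: "('r, 'b) inst list"
  assumes conn: "connected_inst F" and x0: "x0 \<in> adom F" and nonempty: "\<forall>R. [] \<notin> F R"
  shows "bij_betw (\<lambda>p. \<lambda>x\<in>adom F. (fst p, snd p x))
           (SIGMA i:{..<length Ls}. hom_set F (Ls ! i)) (hom_set F (sum_inst Ls))"
proof -
  define n where "n = length Ls"
  define f where "f p = (\<lambda>x\<in>adom F. (fst p, snd p x))" for p :: "nat \<times> ('a \<Rightarrow> 'b)"
  define f' where "f' h = (fst (h x0), \<lambda>x\<in>adom F. snd (h x))" for h :: "'a \<Rightarrow> nat \<times> 'b"
  have component: "\<exists>i<n. (\<forall>x\<in>adom F. fst (h x) = i) \<and> (\<forall>R. \<forall>t\<in>F R. map (snd \<circ> h) t \<in> (Ls ! i) R)"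
    if "h \<in> hom_set F (sum_inst Ls)" for h
    unfolding n_def using that
    by (intro hom_to_sum_inst_component[OF conn x0 nonempty]) (auto dest: hom_set_memD)
  have "bij_betw f (SIGMA i:{..<n}. hom_set F (Ls ! i)) (hom_set F (sum_inst Ls))"
  proof (rule bij_betw_byWitness)
    show "\<forall>p\<in>SIGMA i:{..<n}. hom_set F (Ls ! i). f' (f p) = p"
    proof
      fix p assume p: "p \<in> (SIGMA i:{..<n}. hom_set F (Ls ! i))"
      then have "(\<lambda>x\<in>adom F. snd p x) = snd p"
        by (auto simp: extensional_restrict dest: hom_set_extensional)
      moreover have "(\<lambda>x\<in>adom F. snd (f p x)) = (\<lambda>x\<in>adom F. snd p x)"
        unfolding f_def by (rule restrict_ext) simp
      ultimately show "f' (f p) = p" unfolding f'_def using x0 by (simp add: prod_eq_iff f_def)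
    qed
    show "\<forall>h\<in>hom_set F (sum_inst Ls). f (f' h) = h"
    proof
      fix h assume h: "h \<in> hom_set F (sum_inst Ls)"
      show "f (f' h) = h"
      proof (rule extensionalityI[of _ "adom F"])
        fix x assume x: "x \<in> adom F"
        then have "fst (h x) = fst (h x0)" using component[OF h] x0 by metis
        then show "f (f' h) x = h x" unfolding f_def f'_def using x by (simp add: prod_eq_iff)
      qed (simp_all add: f_def hom_set_extensional[OF h])
    qed
    show "f ` (SIGMA i:{..<n}. hom_set F (Ls ! i)) \<subseteq> hom_set F (sum_inst Ls)"
    proof (rule image_subsetI)
      fix p assume p: "p \<in> (SIGMA i:{..<n}. hom_set F (Ls ! i))"
      have "map (\<lambda>x. (fst p, snd p x)) t \<in> sum_inst Ls R" if "t \<in> F R" for t R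
      proof -
        have "map (snd p) t \<in> (Ls ! fst p) R" using p that by (auto dest: hom_set_memD)
        then show ?thesis using p unfolding sum_inst_def n_def by force
      qed
      then show "f p \<in> hom_set F (sum_inst Ls)" unfolding f_def by (rule restrict_in_hom_set)
    qed
    show "f' ` hom_set F (sum_inst Ls) \<subseteq> (SIGMA i:{..<n}. hom_set F (Ls ! i))"
    proof (rule image_subsetI)
      fix h assume h: "h \<in> hom_set F (sum_inst Ls)"
      then obtain i where i: "i < n" "\<forall>x\<in>adom F. fst (h x) = i"
        and maps: "\<forall>R. \<forall>t\<in>F R. map (snd \<circ> h) t \<in> (Ls ! i) R"
        using component by blast
      have "(\<lambda>x\<in>adom F. snd (h x)) \<in> hom_set F (Ls ! i)"
        using maps by (intro restrict_in_hom_set) (simp add: comp_def)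
      then show "f' h \<in> (SIGMA i:{..<n}. hom_set F (Ls ! i))"
        unfolding f'_def using i x0 by simp
    qed
  qed
  then show ?thesis unfolding f_def n_def .
qed

lemma card_hom_set_sum_inst:
  fixes F :: "('r, 'a) inst" and Ls :: "('r, 'b) inst list"
  assumes "connected_inst F" "x0 \<in> adom F" "\<forall>R. [] \<notin> F R"
    and fin: "finite (adom F)" "\<forall>B\<in>set Ls. finite (adom B)"
  shows "card (hom_set F (sum_inst Ls)) = (\<Sum>B\<leftarrow>Ls. card (hom_set F B))"
proof -
  have "card (hom_set F (sum_inst Ls)) = card (SIGMA i:{..<length Ls}. hom_set F (Ls ! i))"
    using bij_betw_same_card[OF bij_betw_hom_set_sum_inst[OF assms(1-3), of Ls]] by simp
  also have "\<dots> = (\<Sum>i<length Ls. card (hom_set F (Ls ! i)))"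
    using fin by (intro card_SigmaI) (auto intro!: finite_hom_set)
  also have "\<dots> = (\<Sum>B\<leftarrow>Ls. card (hom_set F B))"
    by (simp add: sum.list_conv_set_nth atLeast0LessThan)
  finally show ?thesis .
qed

section \<open>Instances realising a polynomial in the counts\<close>

lemma exists_poly_roots_pos_coeff_0:
  fixes V :: "int set" assumes "finite V" "\<forall>v\<in>V. 0 < v"
  shows "\<exists>p :: int poly. 0 < coeff p 0 \<and> (\<forall>v\<in>V. poly p v = 0)"
proof -
  define p where "p = (\<Prod>v\<in>V. [:- v, 1:] ^ 2)"
  have poly_p: "poly p x = (\<Prod>v\<in>V. (x - v) ^ 2)" for x unfolding p_def poly_prod by simp
  have "coeff p 0 = (\<Prod>v\<in>V. (0 - v) ^ 2)" by (simp flip: poly_0_coeff_0 add: poly_p)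
  also have "\<dots> > 0" using assms(2) by (intro prod_pos) auto
  finally have "0 < coeff p 0" .
  moreover have "poly p v = 0" if "v \<in> V" for v
    using assms(1) that unfolding poly_p by (simp add: prod_zero_iff)
  ultimately show ?thesis by blast
qed

lemma poly_root_pos_coeffs_eq_neg_coeffs:
  fixes p :: "int poly" and x :: nat
  assumes "poly p (int x) = 0"
  shows "(\<Sum>a\<le>degree p. nat (coeff p a) * x ^ a) = (\<Sum>a\<le>degree p. nat (- coeff p a) * x ^ a)"
proof -
  have "int (\<Sum>a\<le>degree p. nat (coeff p a) * x ^ a) - int (\<Sum>a\<le>degree p. nat (- coeff p a) * x ^ a)
      = (\<Sum>a\<le>degree p. (int (nat (coeff p a)) - int (nat (- coeff p a))) * int x ^ a)"
    by (simp add: sum_subtractf left_diff_distrib)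
  also have "\<dots> = poly p (int x)"
    unfolding poly_altdef by (intro sum.cong) auto
  finally show ?thesis using assms by linarith
qed

text \<open>poly_inst k m D E is the disjoint union D + \<Sum>a<m. k a \<cdot> (D^a \<times> E).\<close>

definition poly_summands ::
  "(nat \<Rightarrow> nat) \<Rightarrow> nat \<Rightarrow> ('r, 'b) inst \<Rightarrow> ('r, 'b) inst \<Rightarrow> ('r, 'b list) inst list" where
  "poly_summands k m D E =
     prod_inst [D] # concat (map (\<lambda>a. replicate (k a) (prod_inst (replicate a D @ [E]))) [0..<m])"

definition poly_inst ::
  "(nat \<Rightarrow> nat) \<Rightarrow> nat \<Rightarrow> ('r, 'b) inst \<Rightarrow> ('r, 'b) inst \<Rightarrow> ('r, nat \<times> 'b list) inst" where
  "poly_inst k m D E = sum_inst (poly_summands k m D E)"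

lemma set_poly_summands:
  "B \<in> set (poly_summands k m D E) \<longleftrightarrow>
     B = prod_inst [D] \<or> (\<exists>a<m. 0 < k a \<and> B = prod_inst (replicate a D @ [E]))"
  unfolding poly_summands_def by auto

lemma sum_list_poly_summands:
  "(\<Sum>B\<leftarrow>poly_summands k m D E. f B) = f (prod_inst [D]) + (\<Sum>a<m. k a * f (prod_inst (replicate a D @ [E])))"
  unfolding poly_summands_def by (induction m) (simp_all add: sum_list_replicate)

lemma is_instance_poly_summands:
  assumes sch: "schema S ar" and "is_instance S ar D" "is_instance S ar E"
    and B: "B \<in> set (poly_summands k m D E)"
  shows "is_instance S ar B"
proof -
  consider "B = prod_inst [D]" | a where "B = prod_inst (replicate a D @ [E])"
    using B unfolding set_poly_summands by blast
  then show ?thesis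
    by cases (use assms(2,3) in \<open>auto intro!: is_instance_prod_inst[OF sch]\<close>)
qed

lemma is_instance_poly_inst:
  assumes "schema S ar" "is_instance S ar D" "is_instance S ar E"
  shows "is_instance S ar (poly_inst k m D E)"
  unfolding poly_inst_def using is_instance_poly_summands[OF assms] by (intro is_instance_sum_inst) blast

lemma card_hom_set_poly_inst:
  assumes sch: "schema S ar" and D: "is_instance S ar D" and E: "is_instance S ar E"
    and F: "is_instance S ar F" "connected_inst F" and x0: "x0 \<in> adom F"
  shows "card (hom_set F (poly_inst k m D E)) =
           card (hom_set F D) + (\<Sum>a<m. k a * card (hom_set F D) ^ a) * card (hom_set F E)"
proof -
  have "\<forall>R. [] \<notin> F R" using facts_nonempty_instance[OF sch F(1)] by blast
  moreover have "\<forall>B\<in>set (poly_summands k m D E). finite (adom B)"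
    using finite_adom_instance[OF sch] is_instance_poly_summands[OF sch D E] by blast
  ultimately have "card (hom_set F (poly_inst k m D E)) = (\<Sum>B\<leftarrow>poly_summands k m D E. card (hom_set F B))"
    unfolding poly_inst_def
    by (intro card_hom_set_sum_inst[OF F(2) x0] finite_adom_instance[OF sch F(1)])
  then show ?thesis
    by (simp add: sum_list_poly_summands card_hom_set_prod_inst sum_distrib_right mult.assoc)
qed

lemma hom_equiv_poly_inst_base:
  assumes "k 0 = 0" shows "hom_equiv (poly_inst k m D E) D"
proof -
  have "hom_ex B D" if B: "B \<in> set (poly_summands k m D E)" for B
  proof -
    consider "B = prod_inst [D]" | a where "0 < a" "B = prod_inst (replicate a D @ [E])"
      using B assms unfolding set_poly_summands by (metis gr0I less_irrefl)
    then show ?thesis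
    proof cases
      case 1 then show ?thesis using hom_ex_prod_inst_proj[of 0 "[D]"] by simp
    next
      case 2 then show ?thesis
        using hom_ex_prod_inst_proj[of 0 "replicate a D @ [E]"] by (simp add: nth_append)
    qed
  qed
  then have "hom_ex (poly_inst k m D E) D" unfolding poly_inst_def by (rule hom_ex_sum_inst[rule_format])
  moreover have "hom_ex D (poly_inst k m D E)"
    using hom_ex_prod_inst_single hom_ex_sum_inst_inj[of "prod_inst [D]" "poly_summands k m D E"]
    unfolding poly_inst_def set_poly_summands by (blast intro: hom_ex_trans)
  ultimately show ?thesis unfolding hom_equiv_def ..
qed

lemma hom_equiv_poly_inst_sum:
  assumes "0 < k 0" "0 < m" shows "hom_equiv (poly_inst k m D E) (sum_inst [D, E])"
proof -
  have "hom_ex B (sum_inst [D, E])" if B: "B \<in> set (poly_summands k m D E)" for B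
  proof -
    obtain L where "B = prod_inst L" "last L \<in> {D, E}" "L \<noteq> []"
    proof (cases "B = prod_inst [D]")
      case False
      then obtain a where "B = prod_inst (replicate a D @ [E])"
        using B unfolding set_poly_summands by blast
      then show ?thesis using that[of "replicate a D @ [E]"] by simp
    qed (use that in simp)
    then have "hom_ex B (last L)" using hom_ex_prod_inst_proj[of "length L - 1" L] by (simp add: last_conv_nth)
    moreover have "hom_ex (last L) (sum_inst [D, E])" using \<open>last L \<in> {D, E}\<close> by (intro hom_ex_sum_inst_inj) auto
    ultimately show ?thesis by (rule hom_ex_trans)
  qed
  then have "hom_ex (poly_inst k m D E) (sum_inst [D, E])"
    unfolding poly_inst_def by (rule hom_ex_sum_inst[rule_format])
  moreover have "hom_ex B (poly_inst k m D E)" if "B \<in> set [D, E]" for B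
  proof -
    have "prod_inst [B] \<in> set (poly_summands k m D E)"
      using that assms unfolding set_poly_summands by force
    then show ?thesis unfolding poly_inst_def
      by (rule hom_ex_trans[OF hom_ex_prod_inst_single hom_ex_sum_inst_inj])
  qed
  then have "hom_ex (sum_inst [D, E]) (poly_inst k m D E)" by (rule hom_ex_sum_inst[rule_format])
  ultimately show ?thesis unfolding hom_equiv_def ..
qed

lemma card_hom_set_poly_inst_coeff_signs:
  fixes p :: "int poly"
  assumes sch: "schema S ar" and D: "is_instance S ar D" and E: "is_instance S ar E"
    and F: "is_instance S ar F" "connected_inst F"
    and supp: "hom_ex F E \<longrightarrow> hom_ex F D"
    and root: "0 < card (hom_set F D) \<longrightarrow> poly p (int (card (hom_set F D))) = 0"
  shows "card (hom_set F (poly_inst (\<lambda>a. nat (- coeff p a)) (Suc (degree p)) D E)) =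
         card (hom_set F (poly_inst (\<lambda>a. nat (coeff p a)) (Suc (degree p)) D E))"
proof (cases "adom F = {}")
  case True
  have "F R = {}" for R
  proof (rule ccontr)
    assume "F R \<noteq> {}"
    then obtain t where t: "t \<in> F R" by blast
    then have "t \<noteq> []" using facts_nonempty_instance[OF sch F(1)] by blast
    then show False using set_subset_adom[of t F R, OF t] True by auto
  qed
  then show ?thesis by (simp add: card_hom_set_no_facts)
next
  case False
  then obtain x0 where x0: "x0 \<in> adom F" by blast
  define x where "x = card (hom_set F D)"
  define y where "y = card (hom_set F E)"
  have "(\<Sum>a\<le>degree p. nat (- coeff p a) * x ^ a) * y = (\<Sum>a\<le>degree p. nat (coeff p a) * x ^ a) * y"
  proof (cases "y = 0")
    case False
    have fin: "finite (adom F)" "finite (adom D)" "finite (adom E)"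
      using finite_adom_instance[OF sch] F(1) D E by blast+
    then have "hom_ex F E" using False card_hom_set_pos_iff unfolding y_def by blast
    then have "0 < x" using supp fin card_hom_set_pos_iff unfolding x_def by blast
    then show ?thesis using poly_root_pos_coeffs_eq_neg_coeffs root unfolding x_def by simp
  qed simp
  then show ?thesis
    unfolding x_def y_def using card_hom_set_poly_inst[OF sch D E F x0]
    by (simp add: lessThan_Suc_atMost)
qed

lemma exists_count_equal_hom_equivalents:
  fixes D E :: "('r, 'b) inst" and Fs :: "('r, 'c) inst list"
  assumes sch: "schema S ar" and D: "is_instance S ar D" and E: "is_instance S ar E"
    and Fs: "\<forall>F\<in>set Fs. is_instance S ar F \<and> connected_inst F"
    and supp: "\<forall>F\<in>set Fs. hom_ex F E \<longrightarrow> hom_ex F D"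
  shows "\<exists>(P :: ('r, nat \<times> 'b list) inst) (Q :: ('r, nat \<times> 'b list) inst).
           is_instance S ar P \<and> is_instance S ar Q \<and>
           hom_equiv P D \<and> hom_equiv Q (sum_inst [D, E]) \<and>
           (\<forall>F\<in>set Fs. card (hom_set F P) = card (hom_set F Q))"
proof -
  obtain p :: "int poly" where p0: "0 < coeff p 0" and roots:
    "\<forall>F\<in>set Fs. 0 < card (hom_set F D) \<longrightarrow> poly p (int (card (hom_set F D))) = 0"
    using exists_poly_roots_pos_coeff_0[of "(\<lambda>F. int (card (hom_set F D))) ` set Fs - {0}"]
    by fastforce
  define P where "P = poly_inst (\<lambda>a. nat (- coeff p a)) (Suc (degree p)) D E"
  define Q where "Q = poly_inst (\<lambda>a. nat (coeff p a)) (Suc (degree p)) D E"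
  have "hom_equiv P D" unfolding P_def using p0 by (intro hom_equiv_poly_inst_base) simp
  moreover have "hom_equiv Q (sum_inst [D, E])"
    unfolding Q_def using p0 by (intro hom_equiv_poly_inst_sum) simp_all
  moreover have "\<forall>F\<in>set Fs. card (hom_set F P) = card (hom_set F Q)"
    unfolding P_def Q_def using Fs supp roots
    by (blast intro: card_hom_set_poly_inst_coeff_signs[OF sch D E])
  moreover have "is_instance S ar P" "is_instance S ar Q"
    unfolding P_def Q_def by (rule is_instance_poly_inst[OF sch D E])+
  ultimately show ?thesis by blast
qed

section \<open>Counting versus Boolean left query algorithms\<close>

lemma mem_class_iff_hom_equiv_sum:
  fixes D E W :: "('r, 'a) inst"
  assumes inf: "infinite (UNIV :: 'a set)" and sch: "schema S ar"
    and closed: "closed_hom_equiv S ar C" and alg: "left_query_alg_N S ar C Fs X"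
    and Fs: "\<forall>F\<in>set Fs. is_instance S ar F \<and> connected_inst F"
    and D: "is_instance S ar D" and E: "is_instance S ar E"
    and supp: "\<forall>F\<in>set Fs. hom_ex F E \<longrightarrow> hom_ex F D"
    and W: "is_instance S ar W" "hom_equiv W (sum_inst [D, E])"
  shows "D \<in> C \<longleftrightarrow> W \<in> C"
proof -
  obtain P Q :: "('r, nat \<times> 'a list) inst" where P: "is_instance S ar P" "hom_equiv P D"
    and Q: "is_instance S ar Q" "hom_equiv Q (sum_inst [D, E])"
    and counts: "\<forall>F\<in>set Fs. card (hom_set F P) = card (hom_set F Q)"
    using exists_count_equal_hom_equivalents[OF sch D E Fs supp] by blast
  obtain P' :: "('r, 'a) inst" where P': "is_instance S ar P'" "hom_equiv P' P"
    and counts_P': "\<forall>F :: ('r, 'a) inst. card (hom_set F P') = card (hom_set F P)"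
    using exists_copy_in_infinite_type[OF inf sch P(1)] by blast
  obtain Q' :: "('r, 'a) inst" where Q': "is_instance S ar Q'" "hom_equiv Q' Q"
    and counts_Q': "\<forall>F :: ('r, 'a) inst. card (hom_set F Q') = card (hom_set F Q)"
    using exists_copy_in_infinite_type[OF inf sch Q(1)] by blast
  have "D \<in> C \<longleftrightarrow> P' \<in> C"
    using hom_equiv_sym[OF hom_equiv_trans[OF P'(2) P(2)]]
    by (rule closed_hom_equiv_mem_iff[OF closed D P'(1)])
  also have "\<dots> \<longleftrightarrow> Q' \<in> C"
  proof -
    have "map (\<lambda>F. hom_N F P') Fs = map (\<lambda>F. hom_N F Q') Fs"
      using counts counts_P' counts_Q' by (simp add: hom_N_eq_card_hom_set)
    then show ?thesis using alg P'(1) Q'(1) unfolding left_query_alg_N_def by metis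
  qed
  also have "\<dots> \<longleftrightarrow> W \<in> C"
    using hom_equiv_trans[OF hom_equiv_trans[OF Q'(2) Q(2)] hom_equiv_sym[OF W(2)]]
    by (rule closed_hom_equiv_mem_iff[OF closed Q'(1) W(1)])
  finally show ?thesis .
qed

lemma mem_class_iff_same_hom_B:
  fixes D E :: "('r, 'a) inst"
  assumes inf: "infinite (UNIV :: 'a set)" and sch: "schema S ar"
    and closed: "closed_hom_equiv S ar C" and alg: "left_query_alg_N S ar C Fs X"
    and Fs: "\<forall>F\<in>set Fs. is_instance S ar F \<and> connected_inst F"
    and D: "is_instance S ar D" and E: "is_instance S ar E"
    and same: "map (\<lambda>F. hom_B F D) Fs = map (\<lambda>F. hom_B F E) Fs"
  shows "D \<in> C \<longleftrightarrow> E \<in> C"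
proof -
  have "is_instance S ar (sum_inst [D, E])" using D E by (intro is_instance_sum_inst) auto
  then obtain W :: "('r, 'a) inst" where W: "is_instance S ar W" "hom_equiv W (sum_inst [D, E])"
    using exists_copy_in_infinite_type[OF inf sch] by blast
  have "hom_equiv (sum_inst [D, E]) (sum_inst [E, D])"
    unfolding hom_equiv_def by (auto intro: hom_ex_sum_inst_mono)
  then have W': "hom_equiv W (sum_inst [E, D])" using W(2) by (rule hom_equiv_trans[rotated])
  have "\<forall>F\<in>set Fs. hom_ex F D \<longleftrightarrow> hom_ex F E"
    using same by (simp add: hom_B_iff_hom_ex)
  then have "D \<in> C \<longleftrightarrow> W \<in> C" and "E \<in> C \<longleftrightarrow> W \<in> C"
    using mem_class_iff_hom_equiv_sum[OF inf sch closed alg Fs D E _ W]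
      mem_class_iff_hom_equiv_sum[OF inf sch closed alg Fs E D _ W(1) W'] by simp_all
  then show ?thesis by simp
qed

lemma left_query_alg_B_if_hom_B_determines_class:
  fixes C :: "('r, 'a) inst set" and Fs :: "('r, 'a) inst list"
  assumes "\<And>D E. is_instance S ar D \<Longrightarrow> is_instance S ar E \<Longrightarrow>
             map (\<lambda>F. hom_B F D) Fs = map (\<lambda>F. hom_B F E) Fs \<Longrightarrow> D \<in> C \<Longrightarrow> E \<in> C"
  shows "left_query_alg_B S ar C Fs {map (\<lambda>F. hom_B F D) Fs | D. D \<in> C \<and> is_instance S ar D}"
  unfolding left_query_alg_B_def
proof (intro allI impI iffI)
  fix D :: "('r, 'a) inst" assume D: "is_instance S ar D"
  show "map (\<lambda>F. hom_B F D) Fs \<in> {map (\<lambda>F. hom_B F D) Fs | D. D \<in> C \<and> is_instance S ar D}"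
    if "D \<in> C" using that D by blast
  assume "map (\<lambda>F. hom_B F D) Fs \<in> {map (\<lambda>F. hom_B F D) Fs | D. D \<in> C \<and> is_instance S ar D}"
  then obtain D' where "D' \<in> C" "is_instance S ar D'" "map (\<lambda>F. hom_B F D') Fs = map (\<lambda>F. hom_B F D) Fs"
    by auto
  then show "D \<in> C" using assms[OF _ D] by blast
qed

lemma left_query_alg_N_if_B:
  fixes C :: "('r, 'a) inst set" and Fs :: "('r, 'a) inst list"
  assumes "schema S ar" "\<forall>F\<in>set Fs. is_instance S ar F" "left_query_alg_B S ar C Fs X"
  shows "left_query_alg_N S ar C Fs {v. map (\<lambda>k. 0 < k) v \<in> X}"
  unfolding left_query_alg_N_def
proof (intro allI impI)
  fix D :: "('r, 'a) inst" assume D: "is_instance S ar D"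
  have "hom_B F D \<longleftrightarrow> 0 < hom_N F D" if "F \<in> set Fs" for F
    using that assms(1,2) D
    by (simp add: hom_B_iff_hom_ex hom_N_eq_card_hom_set card_hom_set_pos_iff finite_adom_instance)
  then have "map (\<lambda>k. 0 < k) (map (\<lambda>F. hom_N F D) Fs) = map (\<lambda>F. hom_B F D) Fs" by simp
  moreover have "D \<in> C \<longleftrightarrow> map (\<lambda>F. hom_B F D) Fs \<in> X"
    using assms(3) D unfolding left_query_alg_B_def by blast
  ultimately show "D \<in> C \<longleftrightarrow> map (\<lambda>F. hom_N F D) Fs \<in> {v. map (\<lambda>k. 0 < k) v \<in> X}"
    by (simp only: mem_Collect_eq)
qed

theorem mainTheorem10:
  fixes S :: "'r set" and ar :: "'r \<Rightarrow> nat"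
    and C :: "('r, 'a) inst set" and Fs :: "('r, 'a) inst list"
  assumes "infinite (UNIV :: 'a set)"
    and "schema S ar"
    and "is_class S ar C"
    and "closed_hom_equiv S ar C"
    and "distinct Fs"
    and "\<forall>F\<in>set Fs. is_instance S ar F \<and> connected_inst F"
  shows "(\<exists>X. left_query_alg_N S ar C Fs X) \<longleftrightarrow> (\<exists>X'. left_query_alg_B S ar C Fs X')"
proof
  assume "\<exists>X. left_query_alg_N S ar C Fs X"
  then obtain X where alg: "left_query_alg_N S ar C Fs X" ..
  have "left_query_alg_B S ar C Fs {map (\<lambda>F. hom_B F D) Fs | D. D \<in> C \<and> is_instance S ar D}"
  proof (rule left_query_alg_B_if_hom_B_determines_class)
    fix D E :: "('r, 'a) inst"
    assume "is_instance S ar D" "is_instance S ar E" "map (\<lambda>F. hom_B F D) Fs = map (\<lambda>F. hom_B F E) Fs"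
    then show "D \<in> C \<Longrightarrow> E \<in> C" using mem_class_iff_same_hom_B[OF assms(1,2,4) alg assms(6)] by blast
  qed
  then show "\<exists>X'. left_query_alg_B S ar C Fs X'" ..
next
  assume "\<exists>X'. left_query_alg_B S ar C Fs X'"
  then obtain X' where "left_query_alg_B S ar C Fs X'" ..
  then have "left_query_alg_N S ar C Fs {v. map (\<lambda>k. 0 < k) v \<in> X'}"
    using assms(2,6) by (intro left_query_alg_N_if_B) auto
  then show "\<exists>X. left_query_alg_N S ar C Fs X" ..
qed

end
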